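(* Let $D\in\mathbb{D}^n_+$, $W\in\mathbb{R}^{n\times n}$, $u\in\mathbb{R}^n$, $A:=W-D$, and $\mathcal X=\{x\in\mathbb{R}^n: Dx\in[0,1]^n\}$. (i) A point $x\in\mathcal X$ is an equilibrium of the hard-selector inclusion $x'\in-Dx+\mathcal H(Ax+u)$ (i.e. $0\in-Dx+\mathcal H(Ax+u)$) if and only if it is an equilibrium of the linear-threshold network $\dot x=-Dx+[Wx+u]_0^1$; consequently all members of the family $\dot x=\frac1\tau\left(-Dx+[Dx+\tau(Ax+u)]_0^1\right)$, $\tau>0$, the projected dynamical system $\dot x=\Pi_{\mathcal X}(x,Ax+u)$, and the hard-selector inclusion share the same equilibria in $\mathcal X$. (ii) If $A$ is Lyapunov diagonally stable, the hard-selector inclusion admits a unique equilibrium.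
   Context: $\mathbb{D}^n_+$ is the set of positive diagonal matrices; $[z]_0^1=\max(0,\min(z,1))$ elementwise. $h(z)=\{0\}$ if $z<0$, $[0,1]$ if $z=0$, $\{1\}$ if $z>0$, and $\mathcal H(x)=h(x_1)\times\cdots\times h(x_n)$. $\Pi_{\mathcal X}(x,v)$ is the Euclidean projection of $v$ onto the tangent cone of $\mathcal X$ at $x$. A matrix $M$ is Lyapunov diagonally stable if $M^\top\Lambda+\Lambda M\prec0$ for some $\Lambda\in\mathbb{D}^n_+$. *)

theory Defs
  imports "HOL-Analysis.Analysis"
begin

definition pos_diag :: "real^'n^'n \<Rightarrow> bool" where
  "pos_diag D \<longleftrightarrow> (\<forall>i j. i \<noteq> j \<longrightarrow> D $ i $ j = 0) \<and> (\<forall>i. D $ i $ i > 0)"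

definition clip01 :: "real^'n \<Rightarrow> real^'n" where
  "clip01 z = (\<chi> i. max 0 (min (z $ i) 1))"

definition hsel :: "real \<Rightarrow> real set" where
  "hsel z = (if z < 0 then {0} else if z = 0 then {0..1} else {1})"

definition Hsel :: "real^'n \<Rightarrow> (real^'n) set" where
  "Hsel x = {y. \<forall>i. y $ i \<in> hsel (x $ i)}"

definition tangent_cone :: "'a::real_normed_vector set \<Rightarrow> 'a \<Rightarrow> 'a set" where
  "tangent_cone S x = closure {c *\<^sub>R (y - x) | c y. c \<ge> 0 \<and> y \<in> S}"

definition proj_tangent :: "'a::euclidean_space set \<Rightarrow> 'a \<Rightarrow> 'a \<Rightarrow> 'a" where
  "proj_tangent S x v = closest_point (tangent_cone S x) v"

definition lyap_diag_stable :: "real^'n^'n \<Rightarrow> bool" where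
  "lyap_diag_stable M \<longleftrightarrow> (\<exists>L. pos_diag L \<and>
      (\<forall>z. z \<noteq> 0 \<longrightarrow> z \<bullet> ((transpose M ** L + L ** M) *v z) < 0))"

end

theory Submission
  imports Defs
begin

(* Every equilibrium notion reduces to the componentwise inclusion (D x)_i in h((A x + u)_i).
   For the clipped dynamics, d is a fixed point of d |-> [d + tau a]_0^1 exactly when d in h(a);
   for the projected dynamics, the projection onto the tangent cone vanishes exactly when A x + u
   lies in the normal cone of X at x, and d in h(a) says precisely that a is normal to [0,1] at d.
   An equilibrium exists by Brouwer's theorem for x |-> D^-1 [D x + A x + u]_0^1 on the box
   D^-1 [0,1]^n.  Since h is monotone, two equilibria with difference z satisfy z_i (A z)_i >= 0
   for all i, so z' (A' Lambda + Lambda A) z >= 0 for every positive diagonal Lambda, which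
   Lyapunov diagonal stability only allows for z = 0. *)

lemma zero_in_translate_image_iff:
  fixes a :: "'a::group_add"
  shows "0 \<in> (\<lambda>y. - a + y) ` S \<longleftrightarrow> a \<in> S"
proof -
  have "- a + y = 0 \<longleftrightarrow> y = a" for y
    by (metis add.left_inverse add_minus_cancel)
  then show ?thesis by (auto simp: image_iff)
qed

lemma pos_diag_mult_vec:
  assumes "pos_diag D"
  shows "(D *v x) $ i = D $ i $ i * x $ i"
proof -
  have "(D *v x) $ i = (\<Sum>j\<in>UNIV. D $ i $ j * x $ j)"
    by (simp add: matrix_vector_mult_def)
  also have "\<dots> = (\<Sum>j\<in>UNIV. if j = i then D $ i $ i * x $ i else 0)"
    by (rule sum.cong) (use assms in \<open>auto simp: pos_diag_def\<close>)
  finally show ?thesis by simp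
qed

lemma pos_diag_pos: "pos_diag D \<Longrightarrow> D $ i $ i > 0"
  by (simp add: pos_diag_def)

lemma clip_fixed_iff_hsel:
  fixes d a t :: real
  assumes "t > 0"
  shows "max 0 (min (d + t * a) 1) = d \<longleftrightarrow> d \<in> hsel a"
proof -
  have "t * a < 0 \<longleftrightarrow> a < 0" "t * a > 0 \<longleftrightarrow> a > 0"
    using assms by (simp_all add: mult_less_0_iff zero_less_mult_iff)
  then show ?thesis by (auto simp: hsel_def)
qed

lemma clip01_fixed_iff_Hsel:
  assumes "t > 0"
  shows "clip01 (d + t *\<^sub>R a) = d \<longleftrightarrow> d \<in> Hsel a"
  using clip_fixed_iff_hsel[OF assms] by (simp add: clip01_def Hsel_def vec_eq_iff)

lemma hsel_iff_normal_cone: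
  fixes a d :: real
  shows "d \<in> hsel a \<longleftrightarrow> d \<in> {0..1} \<and> (\<forall>e\<in>{0..1}. a * (e - d) \<le> 0)"
proof
  assume "d \<in> hsel a"
  then show "d \<in> {0..1} \<and> (\<forall>e\<in>{0..1}. a * (e - d) \<le> 0)"
    by (auto simp: hsel_def mult_nonpos_nonneg mult_nonneg_nonpos split: if_splits)
next
  assume d: "d \<in> {0..1} \<and> (\<forall>e\<in>{0..1}. a * (e - d) \<le> 0)"
  have "0 \<in> {0..1::real}" "1 \<in> {0..1::real}" by simp_all
  with d have "a * (1 - d) \<le> 0" "a * (0 - d) \<le> 0" by blast+
  with d show "d \<in> hsel a"
    by (auto simp: hsel_def mult_le_0_iff zero_le_mult_iff)
qed

lemma hsel_monotone:
  "d \<in> hsel a \<Longrightarrow> e \<in> hsel b \<Longrightarrow> 0 \<le> (d - e) * (a - b)"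
  by (auto simp: hsel_def zero_le_mult_iff split: if_splits)

lemma closest_point_cone_eq_0_iff:
  fixes T :: "'a::euclidean_space set"
  assumes "closed T" "cone T" "0 \<in> T"
  shows "closest_point T v = 0 \<longleftrightarrow> (\<forall>t\<in>T. v \<bullet> t \<le> 0)"
proof
  assume p0: "closest_point T v = 0"
  show "\<forall>t\<in>T. v \<bullet> t \<le> 0"
  proof (rule ccontr)
    assume "\<not> (\<forall>t\<in>T. v \<bullet> t \<le> 0)"
    then obtain t where "t \<in> T" "v \<bullet> t > 0" by auto
    then obtain c where "c > 0" and closer: "norm (c *\<^sub>R t - v) < norm v"
      using closer_points_lemma[of v t] by auto
    have "c *\<^sub>R t \<in> T" using \<open>cone T\<close> \<open>t \<in> T\<close> \<open>c > 0\<close> by (simp add: cone_def)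
    then have "dist v 0 \<le> dist v (c *\<^sub>R t)"
      using closest_point_le[OF \<open>closed T\<close>] p0 by metis
    with closer show False by (simp add: dist_norm norm_minus_commute)
  qed
next
  assume polar: "\<forall>t\<in>T. v \<bullet> t \<le> 0"
  define p where "p = closest_point T v"
  have "p \<in> T" unfolding p_def using assms closest_point_in_set by blast
  have "norm (v - p) \<le> norm v"
    using closest_point_le[OF \<open>closed T\<close> \<open>0 \<in> T\<close>] by (simp add: p_def dist_norm)
  then have "(v - p) \<bullet> (v - p) \<le> v \<bullet> v"
    by (simp add: norm_le)
  moreover have "v \<bullet> p \<le> 0" using polar \<open>p \<in> T\<close> by blast
  ultimately have "p \<bullet> p \<le> 0"
    by (simp add: inner_diff_left inner_diff_right inner_commute[of p v])
  then show "closest_point T v = 0"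
    by (metis inner_eq_zero_iff inner_ge_zero order_antisym p_def)
qed

lemma proj_tangent_eq_0_iff:
  fixes S :: "'a::euclidean_space set"
  assumes "x \<in> S"
  shows "proj_tangent S x v = 0 \<longleftrightarrow> (\<forall>y\<in>S. v \<bullet> (y - x) \<le> 0)"
proof -
  define C where "C = {c *\<^sub>R (y - x) | c y. c \<ge> 0 \<and> y \<in> S}"
  have "cone C"
    unfolding cone_def C_def by (auto intro!: exI[of _ "_ * _"])
  moreover have "0 \<in> C"
    unfolding C_def using assms by force
  ultimately have "proj_tangent S x v = 0 \<longleftrightarrow> (\<forall>t\<in>closure C. v \<bullet> t \<le> 0)"
    unfolding proj_tangent_def tangent_cone_def C_def[symmetric]
    by (intro closest_point_cone_eq_0_iff cone_closure) (use closure_subset in auto)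
  also have "\<dots> \<longleftrightarrow> (\<forall>t\<in>C. v \<bullet> t \<le> 0)"
    using closure_minimal[OF _ closed_halfspace_le, of C v] closure_subset by blast
  also have "\<dots> \<longleftrightarrow> (\<forall>y\<in>S. v \<bullet> (y - x) \<le> 0)"
  proof
    assume "\<forall>t\<in>C. v \<bullet> t \<le> 0"
    moreover have "y - x \<in> C" if "y \<in> S" for y
      unfolding C_def using that by (metis (mono_tags, lifting) mem_Collect_eq scaleR_one zero_le_one)
    ultimately show "\<forall>y\<in>S. v \<bullet> (y - x) \<le> 0" by blast
  qed (auto simp: C_def mult_nonneg_nonpos)
  finally show ?thesis .
qed

lemma pos_diag_normal_cone_iff_Hsel:
  fixes D :: "real^'n^'n"
  assumes D: "pos_diag D"
  defines "X \<equiv> {x. \<forall>i. 0 \<le> (D *v x) $ i \<and> (D *v x) $ i \<le> 1}"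
  assumes "x \<in> X"
  shows "(\<forall>y\<in>X. v \<bullet> (y - x) \<le> 0) \<longleftrightarrow> D *v x \<in> Hsel v"
proof
  assume normal: "\<forall>y\<in>X. v \<bullet> (y - x) \<le> 0"
  have "(D *v x) $ i \<in> hsel (v $ i)" for i
    unfolding hsel_iff_normal_cone
  proof (intro conjI ballI)
    show "(D *v x) $ i \<in> {0..1}" using \<open>x \<in> X\<close> by (simp add: X_def)
    fix e :: real assume "e \<in> {0..1}"
    define s where "s = (e - (D *v x) $ i) / D $ i $ i"
    define y where "y = x + s *\<^sub>R axis i 1"
    have "(D *v y) $ j = (if j = i then e else (D *v x) $ j)" for j
      using pos_diag_pos[OF D, of i]
      by (simp add: pos_diag_mult_vec[OF D] y_def s_def axis_def field_simps)
    then have "y \<in> X" using \<open>x \<in> X\<close> \<open>e \<in> {0..1}\<close> by (simp add: X_def)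
    with normal have "s * v $ i \<le> 0" by (force simp: y_def inner_axis)
    then show "v $ i * (e - (D *v x) $ i) \<le> 0"
      using pos_diag_pos[OF D, of i] by (simp add: s_def mult.commute divide_le_0_iff)
  qed
  then show "D *v x \<in> Hsel v" by (simp add: Hsel_def)
next
  assume "D *v x \<in> Hsel v"
  show "\<forall>y\<in>X. v \<bullet> (y - x) \<le> 0"
  proof
    fix y assume "y \<in> X"
    have "v \<bullet> (y - x) = (\<Sum>i\<in>UNIV. v $ i * ((D *v y) $ i - (D *v x) $ i) / D $ i $ i)"
      unfolding inner_vec_def using pos_diag_pos[OF D, THEN less_imp_neq]
      by (intro sum.cong refl) (simp add: pos_diag_mult_vec[OF D] field_simps)
    also have "\<dots> \<le> 0"
    proof (intro sum_nonpos divide_nonpos_pos)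
      fix i
      show "v $ i * ((D *v y) $ i - (D *v x) $ i) \<le> 0"
        using \<open>D *v x \<in> Hsel v\<close> \<open>y \<in> X\<close> by (simp add: Hsel_def hsel_iff_normal_cone X_def)
    qed (rule pos_diag_pos[OF D])
    finally show "v \<bullet> (y - x) \<le> 0" .
  qed
qed

lemma Hsel_equilibrium_exists:
  fixes D A :: "real^'n^'n"
  assumes D: "pos_diag D"
  shows "\<exists>x. D *v x \<in> Hsel (A *v x + u)"
proof -
  define S where "S = cbox (0::real^'n) (\<chi> i. 1 / D $ i $ i)"
  define f where "f x = (\<chi> i. max 0 (min ((D *v x + (A *v x + u)) $ i) 1) / D $ i $ i)" for x
  have "compact S" "convex S" by (simp_all add: S_def)
  moreover have "0 \<in> S"
    using pos_diag_pos[OF D] by (simp add: S_def mem_box_cart less_imp_le)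
  then have "S \<noteq> {}" by blast
  moreover have "continuous_on S f"
    unfolding f_def using pos_diag_pos[OF D, THEN less_imp_neq]
    by (intro continuous_intros) auto
  moreover have "f \<in> S \<rightarrow> S"
    using pos_diag_pos[OF D]
    by (auto simp: S_def mem_box_cart f_def less_imp_le intro!: divide_right_mono)
  ultimately obtain x where "f x = x" by (rule brouwer)
  then have "clip01 (D *v x + 1 *\<^sub>R (A *v x + u)) = D *v x"
    using pos_diag_pos[OF D, THEN less_imp_neq]
    by (auto simp: vec_eq_iff f_def clip01_def pos_diag_mult_vec[OF D] field_simps)
  then show ?thesis using clip01_fixed_iff_Hsel[of 1] by auto
qed

lemma pos_diag_quadratic_form:
  fixes A L :: "real^'n^'n"
  assumes L: "pos_diag L"
  shows "z \<bullet> ((transpose A ** L + L ** A) *v z) = 2 * (\<Sum>i\<in>UNIV. L $ i $ i * z $ i * (A *v z) $ i)"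
proof -
  have "z \<bullet> ((transpose A ** L) *v z) = (A *v z) \<bullet> (L *v z)"
    by (metis dot_lmul_matrix matrix_vector_mul_assoc vector_transpose_matrix)
  also have "\<dots> = (\<Sum>i\<in>UNIV. L $ i $ i * z $ i * (A *v z) $ i)"
    by (simp add: inner_vec_def pos_diag_mult_vec[OF L] algebra_simps)
  finally have transposed_part: "z \<bullet> ((transpose A ** L) *v z) = \<dots>" .
  have "z \<bullet> ((L ** A) *v z) = z \<bullet> (L *v (A *v z))"
    by (simp add: matrix_vector_mul_assoc)
  also have "\<dots> = (\<Sum>i\<in>UNIV. L $ i $ i * z $ i * (A *v z) $ i)"
    by (simp add: inner_vec_def pos_diag_mult_vec[OF L] algebra_simps)
  finally show ?thesis
    by (simp add: matrix_vector_mult_add_rdistrib inner_add_right transposed_part)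
qed

lemma Hsel_equilibrium_unique:
  fixes D A :: "real^'n^'n"
  assumes D: "pos_diag D" and "lyap_diag_stable A"
    and x: "D *v x \<in> Hsel (A *v x + u)" and y: "D *v y \<in> Hsel (A *v y + u)"
  shows "x = y"
proof -
  obtain L where L: "pos_diag L"
    and neg: "\<And>z. z \<noteq> 0 \<Longrightarrow> z \<bullet> ((transpose A ** L + L ** A) *v z) < 0"
    using \<open>lyap_diag_stable A\<close> unfolding lyap_diag_stable_def by blast
  define z where "z = x - y"
  have "0 \<le> L $ i $ i * z $ i * (A *v z) $ i" for i
  proof -
    have "0 \<le> ((D *v x) $ i - (D *v y) $ i) * ((A *v x + u) $ i - (A *v y + u) $ i)"
      using x y by (intro hsel_monotone) (simp_all add: Hsel_def)
    also have "\<dots> = D $ i $ i * (z $ i * (A *v z) $ i)"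
      by (simp add: z_def pos_diag_mult_vec[OF D] matrix_vector_mult_diff_distrib algebra_simps)
    finally have "0 \<le> z $ i * (A *v z) $ i"
      using pos_diag_pos[OF D, of i] by (simp add: zero_le_mult_iff)
    then show ?thesis
      using pos_diag_pos[OF L, of i] by (simp add: mult.assoc)
  qed
  then have "0 \<le> z \<bullet> ((transpose A ** L + L ** A) *v z)"
    unfolding pos_diag_quadratic_form[OF L] by (simp add: sum_nonneg)
  then show "x = y" using neg[of z] by (force simp: z_def)
qed

theorem proposition7:
  fixes D W :: "real^'n^'n" and u :: "real^'n"
  assumes "pos_diag D"
  defines "A \<equiv> W - D"
    and "X \<equiv> {x :: real^'n. \<forall>i. 0 \<le> (D *v x) $ i \<and> (D *v x) $ i \<le> 1}"
  shows "(\<forall>x\<in>X. (0 \<in> (\<lambda>y. - (D *v x) + y) ` Hsel (A *v x + u))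
                 \<longleftrightarrow> 0 = - (D *v x) + clip01 (W *v x + u))
       \<and> (\<forall>x\<in>X. \<forall>\<tau>::real. \<tau> > 0 \<longrightarrow>
              ((0 = (1 / \<tau>) *\<^sub>R (- (D *v x) + clip01 (D *v x + \<tau> *\<^sub>R (A *v x + u))))
                 \<longleftrightarrow> 0 \<in> (\<lambda>y. - (D *v x) + y) ` Hsel (A *v x + u)))
       \<and> (\<forall>x\<in>X. (proj_tangent X x (A *v x + u) = 0)
                 \<longleftrightarrow> 0 \<in> (\<lambda>y. - (D *v x) + y) ` Hsel (A *v x + u))
       \<and> (lyap_diag_stable A \<longrightarrow>
              (\<exists>!x. 0 \<in> (\<lambda>y. - (D *v x) + y) ` Hsel (A *v x + u)))"
proof -
  have clip_equilibrium_iff: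
    "0 = - (D *v x) + clip01 (D *v x + \<tau> *\<^sub>R v) \<longleftrightarrow> D *v x \<in> Hsel v"
    if "\<tau> > 0" for x v :: "real^'n" and \<tau> :: real
    using clip01_fixed_iff_Hsel[OF that] by (auto simp: eq_neg_iff_add_eq_0)
  have rescale: "0 = (1 / \<tau>) *\<^sub>R w \<longleftrightarrow> 0 = w" if "\<tau> > 0" for \<tau> and w :: "real^'n"
    using that by auto
  have W_eq: "W *v x + u = D *v x + 1 *\<^sub>R (A *v x + u)" for x
    by (simp add: A_def matrix_vector_mult_diff_rdistrib)
  have proj_iff: "proj_tangent X x v = 0 \<longleftrightarrow> D *v x \<in> Hsel v" if "x \<in> X" for x v
    using proj_tangent_eq_0_iff[OF that] pos_diag_normal_cone_iff_Hsel[OF assms(1)] that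
    unfolding X_def by blast
  have "lyap_diag_stable A \<Longrightarrow> \<exists>!x. D *v x \<in> Hsel (A *v x + u)"
    using Hsel_equilibrium_exists[OF assms(1)] Hsel_equilibrium_unique[OF assms(1)] by blast
  then show ?thesis
    unfolding zero_in_translate_image_iff W_eq
    by (intro conjI ballI allI impI)
      (simp_all only: clip_equilibrium_iff rescale proj_iff zero_less_one)
qed

end
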